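(* Consider the one-hop wireless network model described in the context, where the channel powers $\gamma_{i,j}$ are i.i.d. with the Weibull distribution with p.d.f. $f(x)=\frac{k}{\lambda}\left(\frac{x}{\lambda}\right)^{k-1}e^{-(x/\lambda)^k}$ and c.d.f. $F(x)=1-e^{-(x/\lambda)^k}$ for $x\ge0$, with parameters $\lambda>0$ and $k\in(0,0.5)\cup[1,\infty)$. Then, with high probability, the achievable throughput (obtained by activating the source-destination pairs with the largest direct-link powers and silencing the rest) satisfies $T=\Omega\left((\log n)^{1/k}\right)$.
   Context: Network model: $n$ sources $S_1,\dots,S_n$ and $n$ destinations $D_1,\dots,D_n$; $S_i$ wishes to communicate with $D_i$ in one hop. The channel power from $S_i$ to $D_j$ is $\gamma_{i,j}\ge0$; all $\gamma_{i,j}$ are i.i.d. with mean $\mu$. A subset $\mathbb{S}$ of sources is active, each with power $1$; $SINR_i=\frac{\gamma_{i,i}}{N_0+\sum_{S_k\in\mathbb{S},k\ne i}\gamma_{k,i}}$ for $S_i\in\mathbb{S}$ (and $0$ otherwise), with noise variance $N_0\ge0$; $D_i$ succeeds if $SINR_i>\beta$ for a fixed constant $\beta>0$. The throughput $T$ is the number of successful destinations. "With high probability" means with probability tending to $1$ as $n\to\infty$. *)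

theory Defs
  imports "HOL-Probability.Probability"
begin

text \<open>Channel powers of a network realisation: g i j is the power from source i to destination j.
  Sources and destinations are indexed by 0..n-1.\<close>

definition interference :: "(nat \<Rightarrow> nat \<Rightarrow> real) \<Rightarrow> nat set \<Rightarrow> nat \<Rightarrow> real" where
  "interference g S i = (\<Sum>k\<in>S - {i}. g k i)"

text \<open>D_i succeeds iff S_i is active and SINR_i > beta, i.e.
  g i i / (N0 + interference) > beta; written multiplicatively so that a zero
  denominator (N0 = 0, no interferers) is handled as SINR = infinity.\<close>
definition success :: "(nat \<Rightarrow> nat \<Rightarrow> real) \<Rightarrow> real \<Rightarrow> real \<Rightarrow> nat set \<Rightarrow> nat \<Rightarrow> bool" where
  "success g N0 \<beta> S i \<longleftrightarrow> i \<in> S \<and> g i i > \<beta> * (N0 + interference g S i)"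

definition throughput :: "nat \<Rightarrow> (nat \<Rightarrow> nat \<Rightarrow> real) \<Rightarrow> real \<Rightarrow> real \<Rightarrow> nat set \<Rightarrow> nat" where
  "throughput n g N0 \<beta> S = card {i \<in> {..<n}. success g N0 \<beta> S i}"

definition top_set :: "nat \<Rightarrow> (nat \<Rightarrow> nat \<Rightarrow> real) \<Rightarrow> nat \<Rightarrow> nat set \<Rightarrow> bool" where
  "top_set n g m S \<longleftrightarrow> S \<subseteq> {..<n} \<and> card S = m \<and>
     (\<forall>i\<in>S. \<forall>j\<in>{..<n} - S. g j j \<le> g i i)"

definition weibull_cdf :: "real \<Rightarrow> real \<Rightarrow> real \<Rightarrow> real" where
  "weibull_cdf lam k x = (if 0 \<le> x then 1 - exp (- ((x / lam) powr k)) else 0)"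

end

theory Submission
  imports Defs "HOL-Real_Asymp.Real_Asymp"
begin

text \<open>
  Fix a threshold \<open>t\<close> at which about \<open>A = a (log n)^(1/k)\<close> of the \<open>n\<close> direct links are expected
  to exceed \<open>t\<close>; for the Weibull law this forces \<open>t \<ge> c (log n)^(1/k)\<close>. By Chebyshev, with high
  probability at least \<open>A/2\<close> direct links exceed \<open>t\<close>, so activating the \<open>m = A/2\<close> strongest pairs
  only uses such links. The interference they cause at a fixed destination is a sum of independent
  terms with mean \<open>O(A)\<close> and variance \<open>O(A)\<close>, so by Chebyshev it exceeds the budget
  \<open>u = t/(2\<beta>) = \<Omega>(A)\<close> with probability \<open>O(1/A)\<close>. Markov's inequality then shows that
  fewer than \<open>A/8\<close> active pairs fail, leaving a throughput of at least \<open>A/4\<close>.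
\<close>

section \<open>Second-moment tools\<close>

lemma (in prob_space) indep_vars_restrict_compose:
  fixes X :: "'i \<Rightarrow> 'a \<Rightarrow> real"
  assumes "indep_vars (\<lambda>_. borel) X I" "\<And>j. j \<in> L \<Longrightarrow> K j \<subseteq> I" "disjoint_family_on K L"
    and "\<And>j. j \<in> L \<Longrightarrow> h j \<in> borel_measurable (PiM (K j) (\<lambda>_. borel))"
  shows "indep_vars (\<lambda>_. borel) (\<lambda>j \<omega>. h j (restrict (\<lambda>i. X i \<omega>) (K j))) L"
  using indep_vars_compose2[OF indep_vars_restrict[OF assms(1-3)], of h "\<lambda>_. borel"] assms(4)
  by simp

lemma (in prob_space) prob_indep_vars_pair:
  fixes X :: "'i \<Rightarrow> 'a \<Rightarrow> real"
  assumes ind: "indep_vars (\<lambda>_. borel) X I" and ab: "a \<in> I" "b \<in> I" "a \<noteq> b"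
    and AB: "A \<in> sets borel" "B \<in> sets borel"
  shows "prob {\<omega>\<in>space M. X a \<omega> \<in> A \<and> X b \<omega> \<in> B} =
         prob {\<omega>\<in>space M. X a \<omega> \<in> A} * prob {\<omega>\<in>space M. X b \<omega> \<in> B}"
proof -
  let ?A = "\<lambda>i. if i = a then A else B"
  have "prob (\<Inter>i\<in>{a,b}. X i -` ?A i \<inter> space M) = (\<Prod>i\<in>{a,b}. prob (X i -` ?A i \<inter> space M))"
    by (rule indep_varsD[OF ind]) (use ab AB in auto)
  moreover have "(\<Inter>i\<in>{a,b}. X i -` ?A i \<inter> space M) = {\<omega>\<in>space M. X a \<omega> \<in> A \<and> X b \<omega> \<in> B}"
    using ab by auto
  ultimately show ?thesis
    using ab by (simp add: vimage_def Int_def conj_commute)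
qed

lemma (in prob_space) variance_add_indep_var:
  fixes X Y :: "'a \<Rightarrow> real"
  assumes ind: "indep_var borel X borel Y"
    and X2: "integrable M (\<lambda>\<omega>. (X \<omega>)\<^sup>2)" and Y2: "integrable M (\<lambda>\<omega>. (Y \<omega>)\<^sup>2)"
  shows "integrable M (\<lambda>\<omega>. (X \<omega> + Y \<omega>)\<^sup>2)"
    and "variance (\<lambda>\<omega>. X \<omega> + Y \<omega>) = variance X + variance Y"
proof -
  have Xm: "X \<in> borel_measurable M" and Ym: "Y \<in> borel_measurable M"
    using indep_var_rv1[OF ind] indep_var_rv2[OF ind] by simp_all
  have X1: "integrable M X" and Y1: "integrable M Y"
    using square_integrable_imp_integrable Xm X2 Ym Y2 by blast+
  have XY: "integrable M (\<lambda>\<omega>. X \<omega> * Y \<omega>)"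
    by (rule indep_var_integrable[OF ind X1 Y1])
  have sq: "(\<lambda>\<omega>. (X \<omega> + Y \<omega>)\<^sup>2) = (\<lambda>\<omega>. (X \<omega>)\<^sup>2 + 2 * (X \<omega> * Y \<omega>) + (Y \<omega>)\<^sup>2)"
    by (simp add: power2_sum algebra_simps)
  show int: "integrable M (\<lambda>\<omega>. (X \<omega> + Y \<omega>)\<^sup>2)"
    unfolding sq using X2 Y2 XY by auto
  have E2: "expectation (\<lambda>\<omega>. (X \<omega> + Y \<omega>)\<^sup>2) =
      expectation (\<lambda>\<omega>. (X \<omega>)\<^sup>2) + 2 * (expectation X * expectation Y) + expectation (\<lambda>\<omega>. (Y \<omega>)\<^sup>2)"
    unfolding sq using X2 Y2 XY indep_var_lebesgue_integral[OF ind X1 Y1] by simp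
  have E1: "expectation (\<lambda>\<omega>. X \<omega> + Y \<omega>) = expectation X + expectation Y"
    using X1 Y1 by simp
  have "variance (\<lambda>\<omega>. X \<omega> + Y \<omega>) =
      expectation (\<lambda>\<omega>. (X \<omega> + Y \<omega>)\<^sup>2) - (expectation (\<lambda>\<omega>. X \<omega> + Y \<omega>))\<^sup>2"
    by (rule variance_eq) (use X1 Y1 int in auto)
  also have "\<dots> = (expectation (\<lambda>\<omega>. (X \<omega>)\<^sup>2) - (expectation X)\<^sup>2)
                 + (expectation (\<lambda>\<omega>. (Y \<omega>)\<^sup>2) - (expectation Y)\<^sup>2)"
    unfolding E1 E2 by (simp add: power2_sum)
  also have "\<dots> = variance X + variance Y"
    using variance_eq[OF X1 X2] variance_eq[OF Y1 Y2] by simp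
  finally show "variance (\<lambda>\<omega>. X \<omega> + Y \<omega>) = variance X + variance Y" .
qed

lemma (in prob_space) variance_sum_indep_vars:
  fixes X :: "'i \<Rightarrow> 'a \<Rightarrow> real"
  assumes "finite I" "indep_vars (\<lambda>_. borel) X I"
    and "\<And>i. i \<in> I \<Longrightarrow> integrable M (\<lambda>\<omega>. (X i \<omega>)\<^sup>2)"
  shows "integrable M (\<lambda>\<omega>. (\<Sum>i\<in>I. X i \<omega>)\<^sup>2) \<and>
         variance (\<lambda>\<omega>. \<Sum>i\<in>I. X i \<omega>) = (\<Sum>i\<in>I. variance (X i))"
  using assms
proof (induction I rule: finite_induct)
  case empty
  then show ?case by simp
next
  case (insert a F)
  have "indep_vars (\<lambda>_. borel) X F"
    using insert.prems(1) by (rule indep_vars_subset) auto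
  with insert have IH: "integrable M (\<lambda>\<omega>. (\<Sum>i\<in>F. X i \<omega>)\<^sup>2)"
      "variance (\<lambda>\<omega>. \<Sum>i\<in>F. X i \<omega>) = (\<Sum>i\<in>F. variance (X i))"
    by auto
  have ind: "indep_var borel (X a) borel (\<lambda>\<omega>. \<Sum>i\<in>F. X i \<omega>)"
    using indep_vars_sum[OF insert.hyps insert.prems(1)] .
  show ?case
    using variance_add_indep_var[OF ind insert.prems(2)[of a] IH(1)] IH(2) insert.hyps by simp
qed

lemma (in prob_space) prob_gt_le_variance:
  fixes X :: "'a \<Rightarrow> real"
  assumes "random_variable borel X" "integrable M (\<lambda>\<omega>. (X \<omega>)\<^sup>2)"
    and "expectation X \<le> u / 2" "u > 0"
  shows "prob {\<omega>\<in>space M. u < X \<omega>} \<le> 4 * variance X / u\<^sup>2"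
proof -
  have "prob {\<omega>\<in>space M. u < X \<omega>} \<le> prob {\<omega>\<in>space M. u / 2 \<le> \<bar>X \<omega> - expectation X\<bar>}"
    by (rule finite_measure_mono) (use assms in auto)
  also have "\<dots> \<le> variance X / (u / 2)\<^sup>2"
    by (rule Chebyshev_inequality) (use assms in auto)
  finally show ?thesis
    by (simp add: power2_eq_square field_simps)
qed

lemma (in prob_space) prob_lt_half_expectation_le_variance:
  fixes X :: "'a \<Rightarrow> real"
  assumes "random_variable borel X" "integrable M (\<lambda>\<omega>. (X \<omega>)\<^sup>2)" "expectation X > 0"
  shows "prob {\<omega>\<in>space M. X \<omega> < expectation X / 2} \<le> 4 * variance X / (expectation X)\<^sup>2"
proof -
  have "prob {\<omega>\<in>space M. X \<omega> < expectation X / 2}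
      \<le> prob {\<omega>\<in>space M. expectation X / 2 \<le> \<bar>X \<omega> - expectation X\<bar>}"
    by (rule finite_measure_mono) (use assms in auto)
  also have "\<dots> \<le> variance X / (expectation X / 2)\<^sup>2"
    by (rule Chebyshev_inequality) (use assms in auto)
  finally show ?thesis
    by (simp add: power2_eq_square field_simps)
qed

lemma real_card_filter_eq_sum:
  "finite A \<Longrightarrow> real (card {x\<in>A. P x}) = (\<Sum>x\<in>A. if P x then 1 else 0)"
  using sum.inter_filter[of A "\<lambda>_. 1::real" P] by simp

lemma borel_measurable_real_card_filter:
  assumes "finite I" "\<And>i. i \<in> I \<Longrightarrow> Measurable.pred M (P i)"
  shows "(\<lambda>\<omega>. real (card {i\<in>I. P i \<omega>})) \<in> borel_measurable M"
  unfolding real_card_filter_eq_sum[OF assms(1)] using assms(2) by measurable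

lemma (in prob_space) prob_card_lt_half_le:
  fixes X :: "'i \<Rightarrow> 'a \<Rightarrow> real"
  assumes I: "finite I" and ind: "indep_vars (\<lambda>_. borel) X I" and A: "A \<in> sets borel"
    and p: "\<And>i. i \<in> I \<Longrightarrow> prob {\<omega>\<in>space M. X i \<omega> \<in> A} = p"
    and pos: "0 < real (card I) * p"
  shows "prob {\<omega>\<in>space M. real (card {i\<in>I. X i \<omega> \<in> A}) < real (card I) * p / 2}
           \<le> 4 / (real (card I) * p)"
proof -
  define W where "W i \<omega> = (indicator A (X i \<omega>) :: real)" for i \<omega>
  have Xm: "X i \<in> borel_measurable M" if "i \<in> I" for i
    using ind that by (simp add: indep_vars_def)
  have Wm: "W i \<in> borel_measurable M" if "i \<in> I" for i
    unfolding W_def using Xm[OF that] A by measurable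
  have Wind: "indep_vars (\<lambda>_. borel) W I"
    unfolding W_def using A by (intro indep_vars_compose2[OF ind]) (auto intro: borel_measurable_indicator)
  have W2: "(\<lambda>\<omega>. (W i \<omega>)\<^sup>2) = W i" for i
    by (auto simp: W_def indicator_def fun_eq_iff)
  have intW: "integrable M (W i)" if "i \<in> I" for i
    by (rule integrable_const_bound[where B=1]) (auto simp: Wm[OF that] W_def indicator_def)
  have EW: "expectation (W i) = p" if "i \<in> I" for i
  proof -
    have "expectation (W i) = expectation (indicator {\<omega>\<in>space M. X i \<omega> \<in> A})"
      by (rule Bochner_Integration.integral_cong) (auto simp: W_def indicator_def)
    also have "\<dots> = p"
      using p[OF that] Xm[OF that] A by simp
    finally show ?thesis .
  qed
  define S where "S \<omega> = (\<Sum>i\<in>I. W i \<omega>)" for \<omega>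
  have Sm: "random_variable borel S"
    unfolding S_def using Wm by simp
  have var: "integrable M (\<lambda>\<omega>. (S \<omega>)\<^sup>2) \<and> variance S = (\<Sum>i\<in>I. variance (W i))"
    unfolding S_def by (rule variance_sum_indep_vars[OF I Wind]) (simp add: W2 intW)
  have "variance (W i) \<le> p" if "i \<in> I" for i
    using variance_eq[of "W i"] intW[OF that] EW[OF that] by (simp add: W2)
  then have varS: "variance S \<le> real (card I) * p"
    using var sum_mono[of I "\<lambda>i. variance (W i)" "\<lambda>_. p"] by simp
  have ES: "expectation S = real (card I) * p"
    unfolding S_def using intW EW by simp
  have card_S: "real (card {i\<in>I. X i \<omega> \<in> A}) = S \<omega>" for \<omega>
    unfolding real_card_filter_eq_sum[OF I] S_def W_def by (simp add: indicator_def of_bool_def)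
  have "prob {\<omega>\<in>space M. S \<omega> < expectation S / 2} \<le> 4 * variance S / (expectation S)\<^sup>2"
    by (rule prob_lt_half_expectation_le_variance) (use Sm var ES pos in auto)
  also have "\<dots> \<le> 4 * (real (card I) * p) / (expectation S)\<^sup>2"
    using varS by (intro divide_right_mono) auto
  also have "\<dots> = 4 / (real (card I) * p)"
    using pos by (simp add: ES power2_eq_square)
  finally show ?thesis
    by (simp add: card_S ES)
qed

lemma (in prob_space) prob_card_ge_le:
  assumes I: "finite I" and A: "\<And>i. i \<in> I \<Longrightarrow> A i \<in> events" and x: "x > 0"
  shows "prob {\<omega>\<in>space M. x \<le> real (card {i\<in>I. \<omega> \<in> A i})} \<le> (\<Sum>i\<in>I. prob (A i)) / x"
proof -
  define B where "B \<omega> = (\<Sum>i\<in>I. indicator (A i) \<omega> :: real)" for \<omega>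
  have card_B: "real (card {i\<in>I. \<omega> \<in> A i}) = B \<omega>" for \<omega>
    unfolding real_card_filter_eq_sum[OF I] B_def by (simp add: indicator_def of_bool_def)
  have intB: "integrable M B"
    unfolding B_def using A by (auto simp: emeasure_eq_measure)
  have EB: "expectation B = (\<Sum>i\<in>I. prob (A i))"
    unfolding B_def using A by (simp add: emeasure_eq_measure)
  show ?thesis
    unfolding card_B EB[symmetric]
    by (rule integral_Markov_inequality_measure[OF intB, where A="space M"]) (auto simp: B_def x intro!: sum_nonneg)
qed

lemma ennreal_le_suminf_increments:
  fixes h :: "real \<Rightarrow> real"
  assumes h: "mono h" "h 0 = 0"
  shows "ennreal (h (max 0 y))
           \<le> (\<Sum>j. ennreal (h (real j + 1) - h (real j)) * indicator {x. real j < x} y)"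
proof (cases "y \<le> 0")
  case True
  then show ?thesis by (simp add: h(2))
next
  case False
  define N where "N = nat \<lceil>y\<rceil>"
  have below: "real j < y" if "j < N" for j
    using that unfolding N_def by linarith
  have inc: "0 \<le> h (real j + 1) - h (real j)" for j
    using h(1) by (simp add: mono_def)
  have "max 0 y \<le> real N"
    using False unfolding N_def by linarith
  then have "h (max 0 y) \<le> h (real N)"
    by (rule monoD[OF h(1)])
  also have "\<dots> = (\<Sum>j<N. h (real j + 1) - h (real j))"
    using sum_lessThan_telescope[of "\<lambda>j. h (real j)" N] h(2) by (simp add: add.commute)
  finally have "ennreal (h (max 0 y)) \<le> ennreal (\<Sum>j<N. h (real j + 1) - h (real j))"
    by (rule ennreal_leI)
  also have "\<dots> = (\<Sum>j<N. ennreal (h (real j + 1) - h (real j)))"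
    by (rule sum_ennreal[symmetric]) (rule inc)
  also have "\<dots> = (\<Sum>j<N. ennreal (h (real j + 1) - h (real j)) * indicator {x. real j < x} y)"
    by (rule sum.cong) (auto simp: below)
  also have "\<dots> \<le> (\<Sum>j. ennreal (h (real j + 1) - h (real j)) * indicator {x. real j < x} y)"
    by (rule sum_le_suminf[OF summableI]) simp_all
  finally show ?thesis .
qed

lemma (in prob_space) expectation_pos_part_le_suminf:
  fixes Y :: "'a \<Rightarrow> real" and h :: "real \<Rightarrow> real"
  assumes Y: "random_variable borel Y" and h: "mono h" "h 0 = 0"
    and sm: "summable (\<lambda>j. (h (real j + 1) - h (real j)) * prob {\<omega>\<in>space M. real j < Y \<omega>})"
  shows "integrable M (\<lambda>\<omega>. h (max 0 (Y \<omega>)))"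
    and "expectation (\<lambda>\<omega>. h (max 0 (Y \<omega>)))
           \<le> (\<Sum>j. (h (real j + 1) - h (real j)) * prob {\<omega>\<in>space M. real j < Y \<omega>})"
proof -
  define w where "w j = h (real j + 1) - h (real j)" for j
  define E where "E j = {\<omega>\<in>space M. real j < Y \<omega>}" for j
  have w: "0 \<le> w j" for j
    using h(1) by (simp add: w_def mono_def)
  have E: "E j \<in> events" for j
    unfolding E_def using Y by measurable
  have f: "(\<lambda>\<omega>. h (max 0 (Y \<omega>))) \<in> borel_measurable M"
    using borel_measurable_mono[OF h(1)] Y by measurable
  have f0: "0 \<le> h (max 0 y)" for y
    using monoD[OF h(1), of 0 "max 0 y"] h(2) by simp
  have "(\<integral>\<^sup>+\<omega>. ennreal (h (max 0 (Y \<omega>))) \<partial>M) \<le> (\<integral>\<^sup>+\<omega>. (\<Sum>j. ennreal (w j) * indicator (E j) \<omega>) \<partial>M)"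
  proof (rule nn_integral_mono)
    fix \<omega> assume "\<omega> \<in> space M"
    then have "indicator {x. real j < x} (Y \<omega>) = (indicator (E j) \<omega> :: ennreal)" for j
      by (simp add: E_def indicator_def)
    then show "ennreal (h (max 0 (Y \<omega>))) \<le> (\<Sum>j. ennreal (w j) * indicator (E j) \<omega>)"
      using ennreal_le_suminf_increments[OF h, of "Y \<omega>"] by (simp add: w_def)
  qed
  also have "\<dots> = (\<Sum>j. \<integral>\<^sup>+\<omega>. ennreal (w j) * indicator (E j) \<omega> \<partial>M)"
    by (rule nn_integral_suminf) (use E in measurable)
  also have "\<dots> = (\<Sum>j. ennreal (w j * prob (E j)))"
    by (simp add: E nn_integral_cmult_indicator emeasure_eq_measure ennreal_mult w)
  also have "\<dots> = ennreal (\<Sum>j. w j * prob (E j))"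
    by (rule suminf_ennreal2) (use w sm in \<open>simp_all add: w_def E_def\<close>)
  finally have le: "(\<integral>\<^sup>+\<omega>. ennreal (h (max 0 (Y \<omega>))) \<partial>M) \<le> ennreal (\<Sum>j. w j * prob (E j))" .
  show int: "integrable M (\<lambda>\<omega>. h (max 0 (Y \<omega>)))"
    using le_less_trans[OF le ennreal_less_top] by (intro integrableI_nonneg[OF f]) (simp_all add: f0)
  have "ennreal (expectation (\<lambda>\<omega>. h (max 0 (Y \<omega>)))) \<le> ennreal (\<Sum>j. w j * prob (E j))"
    using le nn_integral_eq_integral[OF int] f0 by simp
  moreover have "0 \<le> (\<Sum>j. w j * prob (E j))"
    using sm w by (intro suminf_nonneg) (simp_all add: w_def E_def)
  ultimately show "expectation (\<lambda>\<omega>. h (max 0 (Y \<omega>)))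
      \<le> (\<Sum>j. (h (real j + 1) - h (real j)) * prob {\<omega>\<in>space M. real j < Y \<omega>})"
    by (simp add: ennreal_le_iff w_def E_def)
qed

section \<open>A deterministic throughput bound\<close>

definition strong_interference :: "nat \<Rightarrow> (nat \<Rightarrow> nat \<Rightarrow> real) \<Rightarrow> real \<Rightarrow> nat \<Rightarrow> real" where
  "strong_interference n g t i = (\<Sum>k\<in>{..<n}-{i}. if t < g k k then max 0 (g k i) else 0)"

lemma top_set_subset_above:
  assumes top: "top_set n g m S" and m: "m \<le> card {i\<in>{..<n}. t < g i i}"
  shows "S \<subseteq> {i\<in>{..<n}. t < g i i}"
proof
  fix i assume iS: "i \<in> S"
  have Sn: "S \<subseteq> {..<n}" and cS: "card S = m" and dom: "\<And>j. j \<in> {..<n} - S \<Longrightarrow> g j j \<le> g i i"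
    using top iS unfolding top_set_def by auto
  show "i \<in> {i\<in>{..<n}. t < g i i}"
  proof (rule ccontr)
    assume "i \<notin> {i\<in>{..<n}. t < g i i}"
    then have "g i i \<le> t"
      using iS Sn by auto
    then have "{j\<in>{..<n}. t < g j j} \<subseteq> S - {i}"
      using dom by fastforce
    then have "card {j\<in>{..<n}. t < g j j} \<le> card (S - {i})"
      using Sn by (intro card_mono) (auto intro: finite_subset)
    also have "\<dots> < card S"
      using Sn iS by (intro card_Diff1_less) (auto intro: finite_subset)
    finally show False
      using m cS by simp
  qed
qed

lemma success_if_strong_interference_le:
  assumes S: "S \<subseteq> {i\<in>{..<n}. t < g i i}" and i: "i \<in> S"
    and J: "strong_interference n g t i \<le> u" and \<beta>: "\<beta> > 0" "\<beta> * (N0 + u) \<le> t"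
  shows "success g N0 \<beta> S i"
proof -
  have "interference g S i \<le> (\<Sum>k\<in>S-{i}. if t < g k k then max 0 (g k i) else 0)"
    unfolding interference_def using S by (intro sum_mono) auto
  also have "\<dots> \<le> strong_interference n g t i"
    unfolding strong_interference_def using S by (intro sum_mono2) auto
  finally have "\<beta> * (N0 + interference g S i) \<le> \<beta> * (N0 + u)"
    using J \<beta>(1) by (intro mult_left_mono) auto
  then show ?thesis
    using \<beta>(2) S i by (auto simp: success_def)
qed

lemma throughput_ge_card_minus_bad:
  assumes top: "top_set n g m S" and m: "m \<le> card {i\<in>{..<n}. t < g i i}"
    and \<beta>: "\<beta> > 0" "\<beta> * (N0 + u) \<le> t"
  shows "real m - real (card {i\<in>{..<n}. t < g i i \<and> u < strong_interference n g t i})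
           \<le> real (throughput n g N0 \<beta> S)"
proof -
  define Bad where "Bad = {i\<in>{..<n}. t < g i i \<and> u < strong_interference n g t i}"
  have S: "S \<subseteq> {i\<in>{..<n}. t < g i i}"
    by (rule top_set_subset_above[OF top m])
  have "S - Bad \<subseteq> {i\<in>{..<n}. success g N0 \<beta> S i}"
  proof
    fix i assume "i \<in> S - Bad"
    then have "i \<in> S" "strong_interference n g t i \<le> u"
      using S unfolding Bad_def by auto
    then show "i \<in> {i\<in>{..<n}. success g N0 \<beta> S i}"
      using S \<beta> success_if_strong_interference_le[of S n t g i] by auto
  qed
  then have "card (S - Bad) \<le> throughput n g N0 \<beta> S"
    unfolding throughput_def by (intro card_mono) auto
  moreover have "card S - card Bad \<le> card (S - Bad)"
    by (rule diff_card_le_card_Diff) (simp add: Bad_def)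
  moreover have "card S = m"
    using top by (simp add: top_set_def)
  ultimately show ?thesis
    unfolding Bad_def by linarith
qed

lemma top_set_cong:
  assumes "\<And>i j. i < n \<Longrightarrow> j < n \<Longrightarrow> g i j = g' i j"
  shows "top_set n g m S = top_set n g' m S"
  unfolding top_set_def using assms by (auto simp: subset_eq)

lemma throughput_cong:
  assumes "\<And>i j. i < n \<Longrightarrow> j < n \<Longrightarrow> g i j = g' i j" and "S \<subseteq> {..<n}"
  shows "throughput n g N0 \<beta> S = throughput n g' N0 \<beta> S"
proof -
  have "interference g S i = interference g' S i" if "i < n" for i
    unfolding interference_def using assms that by (intro sum.cong) auto
  then show ?thesis
    unfolding throughput_def success_def using assms by (intro arg_cong[where f=card]) auto
qed

lemma top_set_throughput_truncate:
  "(\<forall>S. top_set n (\<lambda>i j. if i < n \<and> j < n then g i j else 0) m S \<longrightarrow>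
       c \<le> real (throughput n (\<lambda>i j. if i < n \<and> j < n then g i j else 0) N0 \<beta> S))
   \<longleftrightarrow> (\<forall>S. top_set n g m S \<longrightarrow> c \<le> real (throughput n g N0 \<beta> S))"
proof -
  have top: "top_set n (\<lambda>i j. if i < n \<and> j < n then g i j else 0) m S = top_set n g m S" for S
    by (rule top_set_cong) simp
  have "throughput n (\<lambda>i j. if i < n \<and> j < n then g i j else 0) N0 \<beta> S = throughput n g N0 \<beta> S"
    if "top_set n g m S" for S
    using that by (intro throughput_cong) (simp_all add: top_set_def)
  then show ?thesis
    using top by auto
qed

lemma top_set_throughput_event_measurable:
  fixes g :: "nat \<Rightarrow> nat \<Rightarrow> 'a \<Rightarrow> real"
  assumes [measurable]: "\<And>i j. g i j \<in> borel_measurable M"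
  shows "{\<omega>\<in>space M. \<forall>S. top_set n (\<lambda>i j. g i j \<omega>) m S \<longrightarrow>
            c \<le> real (throughput n (\<lambda>i j. g i j \<omega>) N0 \<beta> S)} \<in> sets M"
proof -
  have "(\<forall>S. top_set n (\<lambda>i j. g i j \<omega>) m S \<longrightarrow> c \<le> real (throughput n (\<lambda>i j. g i j \<omega>) N0 \<beta> S)) \<longleftrightarrow>
      (\<forall>S\<in>Pow {..<n}. top_set n (\<lambda>i j. g i j \<omega>) m S \<longrightarrow>
         c \<le> (\<Sum>i\<in>{..<n}. if success (\<lambda>i j. g i j \<omega>) N0 \<beta> S i then 1 else 0))" for \<omega>
    unfolding throughput_def real_card_filter_eq_sum[OF finite_lessThan] by (auto simp: top_set_def)
  then show ?thesis
    unfolding top_set_def success_def interference_def by simp measurable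
qed

section \<open>Networks with a common tail function\<close>

text \<open>For a nonnegative variable with tail \<open>q\<close>, these bound \<open>E X\<close> and \<open>E X\<^sup>2\<close>.\<close>

definition first_moment_bound :: "(real \<Rightarrow> real) \<Rightarrow> real" where
  "first_moment_bound q = (\<Sum>j. q (real j))"

definition second_moment_bound :: "(real \<Rightarrow> real) \<Rightarrow> real" where
  "second_moment_bound q = (\<Sum>j. (2 * real j + 1) * q (real j))"

locale channel_network = prob_space M for M :: "'a measure" +
  fixes n :: nat and g :: "nat \<Rightarrow> nat \<Rightarrow> 'a \<Rightarrow> real" and q :: "real \<Rightarrow> real"
  assumes indep: "indep_vars (\<lambda>_. borel) (\<lambda>(i, j). g i j) ({..<n} \<times> {..<n})"
    and measurable_channel[measurable]: "\<And>i j. g i j \<in> borel_measurable M"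
    and tail: "\<And>i j x. i < n \<Longrightarrow> j < n \<Longrightarrow> 0 \<le> x \<Longrightarrow> prob {\<omega>\<in>space M. x < g i j \<omega>} = q x"
    and tail_nonneg: "\<And>x. 0 \<le> q x"
    and summable_weighted_tail: "summable (\<lambda>j. (2 * real j + 1) * q (real j))"
begin

definition interference_above :: "real \<Rightarrow> nat \<Rightarrow> 'a \<Rightarrow> real" where
  "interference_above t i \<omega> = strong_interference n (\<lambda>i j. g i j \<omega>) t i"

definition strong_term :: "real \<Rightarrow> nat \<Rightarrow> nat \<Rightarrow> 'a \<Rightarrow> real" where
  "strong_term t i k \<omega> = (if t < g k k \<omega> then max 0 (g k i \<omega>) else 0)"

lemma interference_above_eq_sum: "interference_above t i = (\<lambda>\<omega>. \<Sum>k\<in>{..<n}-{i}. strong_term t i k \<omega>)"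
  by (simp add: fun_eq_iff interference_above_def strong_interference_def strong_term_def)

lemma measurable_strong_term[measurable]: "strong_term t i k \<in> borel_measurable M"
  unfolding strong_term_def by measurable

lemma measurable_interference_above[measurable]: "interference_above t i \<in> borel_measurable M"
  unfolding interference_above_eq_sum by measurable

lemma summable_tail_at_nat: "summable (\<lambda>j. q (real j))"
proof (rule summable_comparison_test'[OF summable_weighted_tail])
  fix j :: nat
  show "norm (q (real j)) \<le> (2 * real j + 1) * q (real j)"
    using tail_nonneg[of "real j"] by (simp add: algebra_simps)
qed

lemma first_moment_bound_nonneg: "0 \<le> first_moment_bound q"
  unfolding first_moment_bound_def by (intro suminf_nonneg summable_tail_at_nat tail_nonneg)

lemma second_moment_bound_nonneg: "0 \<le> second_moment_bound q"
  unfolding second_moment_bound_def by (intro suminf_nonneg summable_weighted_tail) (simp add: tail_nonneg)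

lemma diagonal_indep: "indep_vars (\<lambda>_. borel) (\<lambda>k \<omega>. g k k \<omega>) {..<n}"
  using indep_vars_restrict_compose[OF indep, of "{..<n}" "\<lambda>k. {(k, k)}" "\<lambda>k f. f (k, k)"]
  by (simp add: disjoint_family_on_def)

lemma strong_term_indep:
  assumes "i < n"
  shows "indep_vars (\<lambda>_. borel) (strong_term t i) ({..<n} - {i})"
proof -
  have "indep_vars (\<lambda>_. borel) (\<lambda>k \<omega>. (\<lambda>f. if t < f (k, k) then max 0 (f (k, i)) else 0)
          (restrict (\<lambda>x. (\<lambda>(i, j). g i j) x \<omega>) {(k, k), (k, i)})) ({..<n} - {i})"
    by (rule indep_vars_restrict_compose[OF indep]) (use assms in \<open>auto simp: disjoint_family_on_def\<close>)
  moreover have "(\<lambda>k \<omega>. (\<lambda>f. if t < f (k, k) then max 0 (f (k, i)) else 0)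
          (restrict (\<lambda>x. (\<lambda>(i, j). g i j) x \<omega>) {(k, k), (k, i)})) = strong_term t i"
    by (auto simp: fun_eq_iff strong_term_def)
  ultimately show ?thesis
    by simp
qed

lemma direct_link_interference_above_indep:
  assumes i: "i < n"
  shows "indep_vars (\<lambda>_. borel) (\<lambda>b \<omega>. if b then g i i \<omega> else interference_above t i \<omega>) UNIV"
proof -
  define K where "K b = (if b then {(i, i)} else (\<Union>k\<in>{..<n}-{i}. {(k, k), (k, i)}))" for b
  define h where "h b = (if b then (\<lambda>f. f (i, i)) else
     (\<lambda>f. \<Sum>k\<in>{..<n}-{i}. if t < f (k, k) then max 0 (f (k, i)) else (0::real)))" for b
  have "indep_vars (\<lambda>_. borel) (\<lambda>b \<omega>. h b (restrict (\<lambda>x. (\<lambda>(i, j). g i j) x \<omega>) (K b))) UNIV"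
  proof (rule indep_vars_restrict_compose[OF indep])
    show "K b \<subseteq> {..<n} \<times> {..<n}" for b
      using i by (auto simp: K_def)
    show "disjoint_family_on K UNIV"
      by (auto simp: disjoint_family_on_def K_def)
    show "h b \<in> borel_measurable (Pi\<^sub>M (K b) (\<lambda>_. borel))" for b
      unfolding h_def K_def by (cases b) simp_all
  qed
  moreover have "h b (restrict (\<lambda>x. (\<lambda>(i, j). g i j) x \<omega>) (K b))
      = (if b then g i i \<omega> else interference_above t i \<omega>)" for b \<omega>
  proof (cases b)
    case False
    have in_K: "(k, k) \<in> K False" "(k, i) \<in> K False" if "k < n" "k \<noteq> i" for k
      using that by (auto simp: K_def)
    show ?thesis
      unfolding h_def interference_above_def strong_interference_def using False
      by (simp, intro sum.cong refl) (simp add: in_K)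
  qed (simp add: h_def K_def)
  ultimately show ?thesis
    by simp
qed

lemma prob_strong_and_cross_above:
  assumes "k < n" "i < n" "k \<noteq> i" "0 \<le> t" "0 \<le> x"
  shows "prob {\<omega>\<in>space M. t < g k k \<omega> \<and> x < g k i \<omega>} = q t * q x"
  using prob_indep_vars_pair[OF indep, of "(k, k)" "(k, i)" "{t<..}" "{x<..}"] tail assms by simp

lemma strong_term_moments:
  assumes k: "k < n" "k \<noteq> i" and i: "i < n" and t: "0 \<le> t"
  shows "integrable M (strong_term t i k)"
    and "expectation (strong_term t i k) \<le> q t * first_moment_bound q"
    and "integrable M (\<lambda>\<omega>. (strong_term t i k \<omega>)\<^sup>2)"
    and "expectation (\<lambda>\<omega>. (strong_term t i k \<omega>)\<^sup>2) \<le> q t * second_moment_bound q"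
proof -
  define Y where "Y \<omega> = (if t < g k k \<omega> then g k i \<omega> else 0)" for \<omega>
  have Y: "random_variable borel Y"
    unfolding Y_def by measurable
  have Z: "strong_term t i k = (\<lambda>\<omega>. max 0 (Y \<omega>))"
    by (auto simp: fun_eq_iff strong_term_def Y_def)
  have "{\<omega>\<in>space M. real j < Y \<omega>} = {\<omega>\<in>space M. t < g k k \<omega> \<and> real j < g k i \<omega>}" for j
    by (auto simp: Y_def)
  then have tail_Y: "prob {\<omega>\<in>space M. real j < Y \<omega>} = q t * q (real j)" for j
    using prob_strong_and_cross_above[OF k(1) i k(2) t] by simp
  have mono_sq: "mono (\<lambda>x::real. (max 0 x)\<^sup>2)"
    by (auto intro!: monoI power_mono)
  have sq_inc: "(max 0 (real j + 1))\<^sup>2 - (max 0 (real j))\<^sup>2 = 2 * real j + 1" for j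
    by (simp add: max_def power2_eq_square algebra_simps)
  have mono_id: "mono (\<lambda>x::real. x)"
    by (rule monoI)
  have sm1: "summable (\<lambda>j. (real j + 1 - real j) * prob {\<omega>\<in>space M. real j < Y \<omega>})"
    unfolding tail_Y using summable_mult[OF summable_tail_at_nat, of "q t"] by simp
  show "integrable M (strong_term t i k)"
    unfolding Z using expectation_pos_part_le_suminf(1)[OF Y mono_id _ sm1] by simp
  have "expectation (strong_term t i k) \<le> (\<Sum>j. (real j + 1 - real j) * prob {\<omega>\<in>space M. real j < Y \<omega>})"
    unfolding Z using expectation_pos_part_le_suminf(2)[OF Y mono_id _ sm1] by simp
  also have "\<dots> = q t * first_moment_bound q"
    unfolding tail_Y first_moment_bound_def using suminf_mult[OF summable_tail_at_nat, of "q t"] by simp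
  finally show "expectation (strong_term t i k) \<le> q t * first_moment_bound q" .
  have sm2: "summable (\<lambda>j. ((max 0 (real j + 1))\<^sup>2 - (max 0 (real j))\<^sup>2) * prob {\<omega>\<in>space M. real j < Y \<omega>})"
    unfolding tail_Y sq_inc using summable_mult[OF summable_weighted_tail, of "q t"] by (simp add: algebra_simps)
  show "integrable M (\<lambda>\<omega>. (strong_term t i k \<omega>)\<^sup>2)"
    unfolding Z using expectation_pos_part_le_suminf(1)[OF Y mono_sq _ sm2] by simp
  have "expectation (\<lambda>\<omega>. (strong_term t i k \<omega>)\<^sup>2)
      \<le> (\<Sum>j. ((max 0 (real j + 1))\<^sup>2 - (max 0 (real j))\<^sup>2) * prob {\<omega>\<in>space M. real j < Y \<omega>})"
    unfolding Z using expectation_pos_part_le_suminf(2)[OF Y mono_sq _ sm2] by simp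
  also have "\<dots> = q t * second_moment_bound q"
    unfolding tail_Y sq_inc second_moment_bound_def
    using suminf_mult[OF summable_weighted_tail, of "q t"] by (simp add: algebra_simps)
  finally show "expectation (\<lambda>\<omega>. (strong_term t i k \<omega>)\<^sup>2) \<le> q t * second_moment_bound q" .
qed

lemma interference_above_moments:
  assumes i: "i < n" and t: "0 \<le> t"
  shows "integrable M (\<lambda>\<omega>. (interference_above t i \<omega>)\<^sup>2)"
    and "expectation (interference_above t i) \<le> real n * q t * first_moment_bound q"
    and "variance (interference_above t i) \<le> real n * q t * second_moment_bound q"
proof -
  note Z = strong_term_moments[OF _ _ i t]
  have card: "real (card ({..<n} - {i})) \<le> real n"
    using card_Diff1_le[of "{..<n}" i] by simp
  have var: "integrable M (\<lambda>\<omega>. (interference_above t i \<omega>)\<^sup>2) \<and>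
      variance (interference_above t i) = (\<Sum>k\<in>{..<n}-{i}. variance (strong_term t i k))"
    unfolding interference_above_eq_sum by (rule variance_sum_indep_vars[OF _ strong_term_indep[OF i]]) (use Z in auto)
  then show "integrable M (\<lambda>\<omega>. (interference_above t i \<omega>)\<^sup>2)"
    by simp
  have "expectation (interference_above t i) = (\<Sum>k\<in>{..<n}-{i}. expectation (strong_term t i k))"
    unfolding interference_above_eq_sum by (rule Bochner_Integration.integral_sum) (use Z in auto)
  also have "\<dots> \<le> (\<Sum>k\<in>{..<n}-{i}. q t * first_moment_bound q)"
    by (rule sum_mono) (use Z in auto)
  also have "\<dots> \<le> real n * (q t * first_moment_bound q)"
    using card tail_nonneg first_moment_bound_nonneg by (simp add: mult_right_mono)
  finally show "expectation (interference_above t i) \<le> real n * q t * first_moment_bound q"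
    by simp
  have "variance (interference_above t i) = (\<Sum>k\<in>{..<n}-{i}. variance (strong_term t i k))"
    using var by simp
  also have "\<dots> \<le> (\<Sum>k\<in>{..<n}-{i}. q t * second_moment_bound q)"
  proof (rule sum_mono)
    fix k assume k: "k \<in> {..<n}-{i}"
    then have "variance (strong_term t i k)
        = expectation (\<lambda>\<omega>. (strong_term t i k \<omega>)\<^sup>2) - (expectation (strong_term t i k))\<^sup>2"
      using Z by (intro variance_eq) auto
    also have "\<dots> \<le> expectation (\<lambda>\<omega>. (strong_term t i k \<omega>)\<^sup>2)"
      by simp
    also have "\<dots> \<le> q t * second_moment_bound q"
      using Z(4)[of k] k by simp
    finally show "variance (strong_term t i k) \<le> q t * second_moment_bound q" .
  qed
  also have "\<dots> \<le> real n * (q t * second_moment_bound q)"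
    using card tail_nonneg second_moment_bound_nonneg by (simp add: mult_right_mono)
  finally show "variance (interference_above t i) \<le> real n * q t * second_moment_bound q"
    by simp
qed

lemma prob_interference_above_gt:
  assumes i: "i < n" and t: "0 \<le> t" and u: "u > 0" "real n * q t * first_moment_bound q \<le> u / 2"
  shows "prob {\<omega>\<in>space M. u < interference_above t i \<omega>}
           \<le> 4 * (real n * q t * second_moment_bound q) / u\<^sup>2"
proof -
  note J = interference_above_moments[OF i t]
  have "prob {\<omega>\<in>space M. u < interference_above t i \<omega>} \<le> 4 * variance (interference_above t i) / u\<^sup>2"
    by (rule prob_gt_le_variance) (use J u in auto)
  also have "\<dots> \<le> 4 * (real n * q t * second_moment_bound q) / u\<^sup>2"
    using J(3) by (intro divide_right_mono) auto
  finally show ?thesis .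
qed

lemma prob_strong_and_interference_above_gt:
  assumes i: "i < n" and t: "0 \<le> t"
  shows "prob {\<omega>\<in>space M. t < g i i \<omega> \<and> u < interference_above t i \<omega>}
           = q t * prob {\<omega>\<in>space M. u < interference_above t i \<omega>}"
  using prob_indep_vars_pair[OF direct_link_interference_above_indep[OF i], of True False "{t<..}" "{u<..}"]
    tail[OF i i t] by simp

lemma prob_few_strong_links:
  assumes t: "0 \<le> t" and pos: "0 < real n * q t"
  shows "prob {\<omega>\<in>space M. real (card {i\<in>{..<n}. t < g i i \<omega>}) < real n * q t / 2}
           \<le> 4 / (real n * q t)"
  using prob_card_lt_half_le[OF finite_lessThan diagonal_indep, of "{t<..}" "q t"] tail t pos
  by simp

lemma prob_many_bad_links:
  assumes t: "0 \<le> t" and u: "u > 0" "real n * q t * first_moment_bound q \<le> u / 2" and x: "x > 0"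
  shows "prob {\<omega>\<in>space M. x \<le> real (card {i\<in>{..<n}. t < g i i \<omega> \<and> u < interference_above t i \<omega>})}
           \<le> real n * q t * (4 * (real n * q t * second_moment_bound q) / u\<^sup>2) / x"
proof -
  define A where "A i = {\<omega>\<in>space M. t < g i i \<omega> \<and> u < interference_above t i \<omega>}" for i
  have A: "A i \<in> events" for i
    unfolding A_def by measurable
  have "{\<omega>\<in>space M. x \<le> real (card {i\<in>{..<n}. t < g i i \<omega> \<and> u < interference_above t i \<omega>})}
      = {\<omega>\<in>space M. x \<le> real (card {i\<in>{..<n}. \<omega> \<in> A i})}"
    by (auto simp: A_def)
  also have "prob \<dots> \<le> (\<Sum>i<n. prob (A i)) / x"
    by (rule prob_card_ge_le[OF finite_lessThan A x])
  also have "\<dots> \<le> (\<Sum>i<n. q t * (4 * (real n * q t * second_moment_bound q) / u\<^sup>2)) / x"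
  proof (intro divide_right_mono sum_mono)
    fix i assume "i \<in> {..<n}"
    then have "prob (A i) = q t * prob {\<omega>\<in>space M. u < interference_above t i \<omega>}"
      unfolding A_def by (intro prob_strong_and_interference_above_gt[OF _ t]) simp
    also have "\<dots> \<le> q t * (4 * (real n * q t * second_moment_bound q) / u\<^sup>2)"
      using \<open>i \<in> {..<n}\<close> by (intro mult_left_mono prob_interference_above_gt[OF _ t u]) (simp_all add: tail_nonneg)
    finally show "prob (A i) \<le> q t * (4 * (real n * q t * second_moment_bound q) / u\<^sup>2)" .
  qed (use x in simp)
  finally show ?thesis
    by simp
qed

lemma top_throughput_prob_ge:
  assumes t: "0 \<le> t" and A: "0 < real n * q t"
    and u: "u > 0" "real n * q t * first_moment_bound q \<le> u / 2"
    and \<beta>: "\<beta> > 0" "\<beta> * (N0 + u) \<le> t" and m: "real m \<le> real n * q t / 2"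
  shows "1 - 4 / (real n * q t) - 32 * (real n * q t) * second_moment_bound q / u\<^sup>2
    \<le> prob {\<omega>\<in>space M. \<forall>S. top_set n (\<lambda>i j. g i j \<omega>) m S \<longrightarrow>
                 real m - real n * q t / 8 \<le> real (throughput n (\<lambda>i j. g i j \<omega>) N0 \<beta> S)}"
    (is "_ \<le> prob ?Good")
proof -
  define Few where
    "Few = {\<omega>\<in>space M. real (card {i\<in>{..<n}. t < g i i \<omega>}) < real n * q t / 2}"
  define Many where
    "Many = {\<omega>\<in>space M. real n * q t / 8 \<le>
       real (card {i\<in>{..<n}. t < g i i \<omega> \<and> u < interference_above t i \<omega>})}"
  have [measurable]: "(\<lambda>\<omega>. real (card {i\<in>{..<n}. t < g i i \<omega>})) \<in> borel_measurable M"
    "(\<lambda>\<omega>. real (card {i\<in>{..<n}. t < g i i \<omega> \<and> u < interference_above t i \<omega>}))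
       \<in> borel_measurable M"
    by (intro borel_measurable_real_card_filter finite_lessThan; measurable)+
  have events: "Few \<in> events" "Many \<in> events"
    unfolding Few_def Many_def by measurable
  have good: "?Good \<in> events"
    by (rule top_set_throughput_event_measurable) simp
  have "prob Few \<le> 4 / (real n * q t)"
    unfolding Few_def by (rule prob_few_strong_links[OF t A])
  moreover have "prob Many \<le> 32 * (real n * q t) * second_moment_bound q / u\<^sup>2"
  proof -
    have "prob Many \<le> real n * q t * (4 * (real n * q t * second_moment_bound q) / u\<^sup>2) / (real n * q t / 8)"
      unfolding Many_def using A by (intro prob_many_bad_links[OF t u]) simp
    also have "\<dots> = 32 * (real n * q t) * second_moment_bound q / u\<^sup>2"
      using A by (simp add: field_simps)
    finally show ?thesis .
  qed
  moreover have "space M - (Few \<union> Many) \<subseteq> ?Good"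
  proof safe
    fix \<omega> S assume \<omega>: "\<omega> \<in> space M" "\<omega> \<notin> Few" "\<omega> \<notin> Many"
      and top: "top_set n (\<lambda>i j. g i j \<omega>) m S"
    have "m \<le> card {i\<in>{..<n}. t < g i i \<omega>}"
      using \<omega> m unfolding Few_def by simp
    from throughput_ge_card_minus_bad[OF top this \<beta>]
    show "real m - real n * q t / 8 \<le> real (throughput n (\<lambda>i j. g i j \<omega>) N0 \<beta> S)"
      using \<omega> unfolding Many_def interference_above_def by simp
  qed
  then have "prob (space M - (Few \<union> Many)) \<le> prob ?Good"
    using events good by (intro finite_measure_mono) auto
  moreover have "prob (space M - (Few \<union> Many)) \<ge> 1 - prob Few - prob Many"
    using prob_compl[of "Few \<union> Many"] measure_Un_le[of Few M Many] events by simp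
  ultimately show ?thesis
    by linarith
qed

lemma top_half_throughput_prob_ge:
  defines "\<mu> \<equiv> first_moment_bound q" and "\<nu> \<equiv> second_moment_bound q"
  assumes t: "0 \<le> t" and A: "real n * q t = A" "8 \<le> A" and \<mu>: "0 < \<mu>"
    and u: "2 * \<mu> * A \<le> u" and \<beta>: "\<beta> > 0" "\<beta> * (N0 + u) \<le> t"
  shows "1 - (4 + 8 * \<nu> / \<mu>\<^sup>2) / A
    \<le> prob {\<omega>\<in>space M. \<forall>S. top_set n (\<lambda>i j. g i j \<omega>) (nat \<lfloor>A / 2\<rfloor>) S \<longrightarrow>
                 A / 4 \<le> real (throughput n (\<lambda>i j. g i j \<omega>) N0 \<beta> S)}"
proof -
  have "0 < 2 * \<mu> * A"
    using \<mu> A by simp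
  with u have u_pos: "0 < u"
    by linarith
  have "1 - 4 / A - 32 * A * \<nu> / u\<^sup>2
      \<le> prob {\<omega>\<in>space M. \<forall>S. top_set n (\<lambda>i j. g i j \<omega>) (nat \<lfloor>A / 2\<rfloor>) S \<longrightarrow>
                 real (nat \<lfloor>A / 2\<rfloor>) - A / 8 \<le> real (throughput n (\<lambda>i j. g i j \<omega>) N0 \<beta> S)}"
  proof (rule top_throughput_prob_ge[OF t _ u_pos _ \<beta>, unfolded A(1), folded \<nu>_def])
    show "A * first_moment_bound q \<le> u / 2" "real (nat \<lfloor>A / 2\<rfloor>) \<le> A / 2"
      using u A unfolding \<mu>_def by (simp_all add: algebra_simps, linarith)
  qed (use A in simp)
  also have "\<dots> \<le> prob {\<omega>\<in>space M. \<forall>S. top_set n (\<lambda>i j. g i j \<omega>) (nat \<lfloor>A / 2\<rfloor>) S \<longrightarrow>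
                 A / 4 \<le> real (throughput n (\<lambda>i j. g i j \<omega>) N0 \<beta> S)}"
  proof (intro finite_measure_mono top_set_throughput_event_measurable)
    have "A / 4 \<le> real (nat \<lfloor>A / 2\<rfloor>) - A / 8"
      using A by linarith
    then show "{\<omega>\<in>space M. \<forall>S. top_set n (\<lambda>i j. g i j \<omega>) (nat \<lfloor>A / 2\<rfloor>) S \<longrightarrow>
                 real (nat \<lfloor>A / 2\<rfloor>) - A / 8 \<le> real (throughput n (\<lambda>i j. g i j \<omega>) N0 \<beta> S)}
      \<subseteq> {\<omega>\<in>space M. \<forall>S. top_set n (\<lambda>i j. g i j \<omega>) (nat \<lfloor>A / 2\<rfloor>) S \<longrightarrow>
                 A / 4 \<le> real (throughput n (\<lambda>i j. g i j \<omega>) N0 \<beta> S)}"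
      by (auto intro: order_trans)
  qed simp
  moreover have "32 * A * \<nu> / u\<^sup>2 \<le> 32 * A * \<nu> / (2 * \<mu> * A)\<^sup>2"
    using u u_pos \<mu> A second_moment_bound_nonneg unfolding \<nu>_def
    by (intro divide_left_mono power_mono mult_pos_pos) auto
  moreover have "32 * A * \<nu> / (2 * \<mu> * A)\<^sup>2 = 8 * \<nu> / \<mu>\<^sup>2 / A"
    using \<mu> A by (simp add: power2_eq_square field_simps)
  ultimately show ?thesis
    by (simp add: add_divide_distrib diff_divide_distrib)
qed

end

section \<open>Weibull channels\<close>

definition weibull_tail :: "real \<Rightarrow> real \<Rightarrow> real \<Rightarrow> real" where
  "weibull_tail lam k x = exp (- ((x / lam) powr k))"

lemma summable_weibull_tail:
  assumes "lam > 0" "k > 0"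
  shows "summable (\<lambda>j. (2 * real j + 1) * weibull_tail lam k (real j))"
proof -
  have "(\<lambda>j::nat. (2 * real j + 1) * exp (- ((real j / lam) powr k))) \<in> O(\<lambda>j. 1 / real j ^ 2)"
    using assms by real_asymp
  moreover have "summable (\<lambda>j::nat. norm (1 / real j ^ 2))"
    using inverse_power_summable[of 2, where 'a=real] by (simp add: field_simps)
  ultimately show ?thesis
    unfolding weibull_tail_def by (rule summable_comparison_test_bigo[rotated])
qed

lemma first_moment_bound_weibull_ge_1:
  assumes "lam > 0" "k > 0"
  shows "1 \<le> first_moment_bound (weibull_tail lam k)"
proof -
  have "summable (\<lambda>j. weibull_tail lam k (real j))"
    by (rule summable_comparison_test'[OF summable_weibull_tail[OF assms]])
      (simp add: weibull_tail_def)
  then have "(\<Sum>j\<in>{0}. weibull_tail lam k (real j)) \<le> first_moment_bound (weibull_tail lam k)"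
    unfolding first_moment_bound_def by (intro sum_le_suminf) (simp_all add: weibull_tail_def)
  then show ?thesis
    using assms by (simp add: weibull_tail_def)
qed

lemma (in prob_space) prob_gt_eq_weibull_tail:
  assumes X: "random_variable borel X" and cdf: "prob {\<omega>\<in>space M. X \<omega> \<le> x} = weibull_cdf lam k x"
    and x: "0 \<le> x"
  shows "prob {\<omega>\<in>space M. x < X \<omega>} = weibull_tail lam k x"
proof -
  have "{\<omega>\<in>space M. x < X \<omega>} = space M - {\<omega>\<in>space M. X \<omega> \<le> x}"
    by auto
  then show ?thesis
    using prob_compl[of "{\<omega>\<in>space M. X \<omega> \<le> x}"] X cdf x
    by (simp add: weibull_cdf_def weibull_tail_def)
qed

lemma weibull_tail_threshold:
  assumes lam: "lam > 0" and k: "k > 0" and n: "2 \<le> n" and A: "0 < A" "A \<le> sqrt (real n)"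
  shows "real n * weibull_tail lam k (lam * ln (real n / A) powr (1 / k)) = A"
    and "lam * (1 / 2) powr (1 / k) * ln (real n) powr (1 / k) \<le> lam * ln (real n / A) powr (1 / k)"
proof -
  have n_pos: "0 < real n"
    using n by simp
  have "sqrt (real n) * A \<le> sqrt (real n) * sqrt (real n)"
    using A by (intro mult_left_mono) auto
  then have "sqrt (real n) \<le> real n / A"
    using A n_pos by (simp add: pos_le_divide_eq)
  then have "ln (sqrt (real n)) \<le> ln (real n / A)"
    using A n_pos by (subst ln_le_cancel_iff) auto
  then have half_ln: "ln (real n) / 2 \<le> ln (real n / A)"
    using n_pos by (simp add: ln_sqrt)
  have ln_pos: "0 < ln (real n)"
    using n by simp
  have "((lam * ln (real n / A) powr (1 / k)) / lam) powr k = (ln (real n / A) powr (1 / k)) powr k"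
    using lam by simp
  also have "\<dots> = ln (real n / A)"
    using half_ln ln_pos k by (simp add: powr_powr)
  finally have "weibull_tail lam k (lam * ln (real n / A) powr (1 / k)) = exp (- ln (real n / A))"
    by (simp add: weibull_tail_def)
  also have "\<dots> = A / real n"
    using A n_pos by (simp add: exp_minus)
  finally show "real n * weibull_tail lam k (lam * ln (real n / A) powr (1 / k)) = A"
    using n_pos by simp
  have "(1 / 2) powr (1 / k) * ln (real n) powr (1 / k) = (ln (real n) / 2) powr (1 / k)"
    using ln_pos by (simp add: powr_mult[symmetric])
  also have "\<dots> \<le> ln (real n / A) powr (1 / k)"
    using half_ln ln_pos k by (intro powr_mono2) auto
  finally show "lam * (1 / 2) powr (1 / k) * ln (real n) powr (1 / k) \<le> lam * ln (real n / A) powr (1 / k)"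
    using lam by (simp add: mult.assoc)
qed

lemma channel_network_weibull_truncation:
  assumes "prob_space M" and lam: "lam > 0" and k: "k > 0"
    and indep: "prob_space.indep_vars M (\<lambda>_. borel) (\<lambda>(i, j). g i j) ({..<n} \<times> {..<n})"
    and cdf: "\<And>i j x. i < n \<Longrightarrow> j < n \<Longrightarrow> measure M {\<omega>\<in>space M. g i j \<omega> \<le> x} = weibull_cdf lam k x"
  shows "channel_network M n (\<lambda>i j \<omega>. if i < n \<and> j < n then g i j \<omega> else 0) (weibull_tail lam k)"
proof -
  interpret prob_space M
    by fact
  have g: "g i j \<in> borel_measurable M" if "i < n" "j < n" for i j
    using indep that unfolding indep_vars_def by auto
  show ?thesis
  proof unfold_locales
    show "indep_vars (\<lambda>_. borel) (\<lambda>(i, j). \<lambda>\<omega>. if i < n \<and> j < n then g i j \<omega> else 0) ({..<n} \<times> {..<n})"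
      using indep by (rule indep_vars_cong[THEN iffD1, rotated 3]) (auto simp: fun_eq_iff)
    show "(\<lambda>\<omega>. if i < n \<and> j < n then g i j \<omega> else 0) \<in> borel_measurable M" for i j
      using g by (cases "i < n \<and> j < n") auto
    show "prob {\<omega>\<in>space M. x < (if i < n \<and> j < n then g i j \<omega> else 0)} = weibull_tail lam k x"
      if "i < n" "j < n" "0 \<le> x" for i j x
      using prob_gt_eq_weibull_tail[OF g cdf] that by simp
    show "0 \<le> weibull_tail lam k x" for x
      by (simp add: weibull_tail_def)
  qed (rule summable_weibull_tail[OF lam k])
qed

lemma (in channel_network) weibull_top_throughput_prob_ge:
  fixes a lam k \<beta> N0 :: real
  defines "\<mu> \<equiv> first_moment_bound q" and "\<nu> \<equiv> second_moment_bound q"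
    and "L \<equiv> ln (real n) powr (1 / k)"
  assumes q: "q = weibull_tail lam k" and lam: "lam > 0" and k: "k > 0" and \<beta>: "\<beta> > 0"
    and a: "a > 0" "4 * \<beta> * \<mu> * a \<le> lam * (1 / 2) powr (1 / k)"
    and n: "2 \<le> n" "a * L \<le> sqrt (real n)" "N0 \<le> 2 * \<mu> * a * L" "8 \<le> a * L"
  shows "1 - (4 + 8 * \<nu> / \<mu>\<^sup>2) / (a * L)
    \<le> prob {\<omega>\<in>space M. \<forall>S. top_set n (\<lambda>i j. g i j \<omega>) (min n (nat \<lfloor>a * L / 2\<rfloor>)) S \<longrightarrow>
                 a / 4 * L \<le> real (throughput n (\<lambda>i j. g i j \<omega>) N0 \<beta> S)}"
proof -
  \<comment> \<open>\<open>t\<close> is chosen so that exactly \<open>A\<close> direct links are expected to exceed it.\<close>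
  define A where "A = a * L"
  define t where "t = lam * ln (real n / A) powr (1 / k)"
  define u where "u = t / (2 * \<beta>)"
  have A: "8 \<le> A" "A \<le> sqrt (real n)"
    using n unfolding A_def by simp_all
  have \<mu>: "1 \<le> \<mu>"
    unfolding \<mu>_def q by (rule first_moment_bound_weibull_ge_1[OF lam k])
  have nq: "real n * q t = A"
    unfolding q t_def using weibull_tail_threshold(1)[OF lam k n(1) _ A(2)] A by simp
  have t_ge: "4 * \<beta> * \<mu> * A \<le> t"
    using weibull_tail_threshold(2)[OF lam k n(1) _ A(2)] A a(2) mult_right_mono[OF a(2), of L]
    unfolding A_def L_def t_def by (simp add: mult.assoc)
  then have u_ge: "2 * \<mu> * A \<le> u"
    unfolding u_def using \<beta> by (simp add: field_simps)
  have "0 \<le> 4 * \<beta> * \<mu> * A"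
    using \<beta> \<mu> A by simp
  with t_ge have t: "0 \<le> t"
    by linarith
  have "\<beta> * N0 \<le> \<beta> * (2 * \<mu> * A)"
    using n(3) \<beta> unfolding A_def by (simp add: mult.assoc)
  moreover have "\<beta> * (N0 + u) = \<beta> * N0 + t / 2"
    using \<beta> unfolding u_def by (simp add: field_simps)
  ultimately have budget: "\<beta> * (N0 + u) \<le> t"
    using t_ge by (simp add: algebra_simps)
  have "sqrt (real n) \<le> real n"
    using n(1) by (intro real_le_lsqrt) (auto simp: power2_eq_square)
  then have "min n (nat \<lfloor>A / 2\<rfloor>) = nat \<lfloor>A / 2\<rfloor>"
    using A by linarith
  then show ?thesis
    using top_half_throughput_prob_ge[OF t nq A(1) _ u_ge[unfolded \<mu>_def] \<beta> budget] \<mu>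
    unfolding A_def \<mu>_def \<nu>_def by simp
qed

lemma eventually_log_powr_regime:
  fixes a b k N0 :: real
  assumes "a > 0" "b > 0" "k > 0"
  shows "eventually (\<lambda>n. 2 \<le> n \<and> a * ln (real n) powr (1 / k) \<le> sqrt (real n) \<and>
      N0 \<le> b * (a * ln (real n) powr (1 / k)) \<and> 8 \<le> a * ln (real n) powr (1 / k)) sequentially"
proof -
  have "eventually (\<lambda>n. N0 \<le> b * (a * ln (real n) powr (1 / k))) sequentially"
    "eventually (\<lambda>n. a * ln (real n) powr (1 / k) \<le> sqrt (real n)) sequentially"
    "eventually (\<lambda>n. 8 \<le> a * ln (real n) powr (1 / k)) sequentially"
    using assms by real_asymp+
  then show ?thesis
    using eventually_ge_at_top[of 2] by eventually_elim simp
qed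

theorem corollary2:
  fixes M :: "'a measure"
    and \<gamma> :: "nat \<Rightarrow> nat \<Rightarrow> nat \<Rightarrow> 'a \<Rightarrow> real"
    and lam k N0 \<beta> :: real
  assumes "prob_space M"
    and "lam > 0"
    and "(0 < k \<and> k < 1/2) \<or> 1 \<le> k"
    and "N0 \<ge> 0"
    and "\<beta> > 0"
    and "\<And>n. prob_space.indep_vars M (\<lambda>_. borel) (\<lambda>(i, j). \<gamma> n i j) ({..<n} \<times> {..<n})"
    and "\<And>n i j x. i < n \<Longrightarrow> j < n \<Longrightarrow>
           measure M {\<omega> \<in> space M. \<gamma> n i j \<omega> \<le> x} = weibull_cdf lam k x"
  shows "\<exists>c > 0. \<exists>m :: nat \<Rightarrow> nat. (\<forall>n. m n \<le> n) \<and>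
     (\<lambda>n. measure M {\<omega> \<in> space M. \<forall>S. top_set n (\<lambda>i j. \<gamma> n i j \<omega>) (m n) S \<longrightarrow>
            real (throughput n (\<lambda>i j. \<gamma> n i j \<omega>) N0 \<beta> S) \<ge> c * ln (real n) powr (1 / k)})
     \<longlonglongrightarrow> 1"
proof -
  have lam: "lam > 0" and k: "k > 0" and \<beta>: "\<beta> > 0"
    using assms(2,3,5) by auto
  define \<mu> where "\<mu> = first_moment_bound (weibull_tail lam k)"
  define \<nu> where "\<nu> = second_moment_bound (weibull_tail lam k)"
  define a where "a = lam * (1 / 2) powr (1 / k) / (4 * \<beta> * \<mu>)"
  define m where "m n = min n (nat \<lfloor>a * ln (real n) powr (1 / k) / 2\<rfloor>)" for n
  have \<mu>: "1 \<le> \<mu>"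
    unfolding \<mu>_def by (rule first_moment_bound_weibull_ge_1[OF lam k])
  then have a: "a > 0" "4 * \<beta> * \<mu> * a \<le> lam * (1 / 2) powr (1 / k)"
    unfolding a_def using lam \<beta> by simp_all
  have "2 * \<mu> > 0"
    using \<mu> by simp
  note large = eventually_log_powr_regime[OF a(1) this k, of N0]
  have lower: "eventually (\<lambda>n. 1 - (4 + 8 * \<nu> / \<mu>\<^sup>2) / (a * ln (real n) powr (1 / k)) \<le>
      measure M {\<omega> \<in> space M. \<forall>S. top_set n (\<lambda>i j. \<gamma> n i j \<omega>) (m n) S \<longrightarrow>
        real (throughput n (\<lambda>i j. \<gamma> n i j \<omega>) N0 \<beta> S) \<ge> a / 4 * ln (real n) powr (1 / k)}) sequentially"
    (is "eventually (\<lambda>n. _ \<le> ?P n) _")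
    using large
  proof eventually_elim
    case (elim n)
    interpret channel_network M n "\<lambda>i j \<omega>. if i < n \<and> j < n then \<gamma> n i j \<omega> else 0" "weibull_tail lam k"
      by (rule channel_network_weibull_truncation[OF assms(1) lam k assms(6,7)])
    show ?case
      using weibull_top_throughput_prob_ge[OF refl lam k \<beta> a[unfolded \<mu>_def], of N0,
          unfolded top_set_throughput_truncate] elim
      by (simp add: m_def \<mu>_def \<nu>_def mult.assoc)
  qed
  have lim: "(\<lambda>n. 1 - (4 + 8 * \<nu> / \<mu>\<^sup>2) / (a * ln (real n) powr (1 / k))) \<longlonglongrightarrow> 1"
    using a(1) k by real_asymp
  have "?P \<longlonglongrightarrow> 1"
    by (rule tendsto_sandwich[OF lower _ lim tendsto_const]) (simp add: prob_space.prob_le_1[OF assms(1)])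
  moreover have "\<forall>n. m n \<le> n"
    by (simp add: m_def)
  ultimately show ?thesis
    using a(1) by (intro exI[of _ "a / 4"] exI[of _ m]) auto
qed

end
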